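(* Let $A_o,A_i\in\mathbb R^{n_y\times n_x}$, let $B_o,B_i\in\mathbb R^{n_y\times n_y}$ and $C_o,C_i\in\mathbb R^{n_x\times n_x}$ be invertible. If the inclusion $y\in\{(A_o+B_o\Delta C_o)x:\|\Delta\|\le1\}$ contains the inclusion $y\in\{(A_i+B_i\Delta C_i)x:\|\Delta\|\le1\}$, then $\sigma_{\max}(\tilde B)\,\sigma_{\max}(\tilde C)\le1$, where $\tilde B=B_o^{-1}B_i$ and $\tilde C=C_iC_o^{-1}$.
   Context: $\|\cdot\|$ is the spectral norm and $\sigma_{\max}$ denotes the largest singular value. An inclusion contains another if every pair $(x,y)\in\mathbb C^{n_x}\times\mathbb C^{n_y}$ satisfying the second also satisfies the first. *)

theory Defs
  imports "HOL-Analysis.Analysis"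
begin

definition cmat :: "real ^ 'n ^ 'm \<Rightarrow> complex ^ 'n ^ 'm" where
  "cmat M = (\<chi> i j. complex_of_real (M $ i $ j))"

text \<open>Spectral norm (operator norm induced by the Euclidean norms), i.e. the
  largest singular value.\<close>
definition spec_norm :: "'a::real_normed_field ^ 'n ^ 'm \<Rightarrow> real" where
  "spec_norm M = onorm (\<lambda>v. M *v v)"

definition incl :: "real ^ 'nx ^ 'ny \<Rightarrow> real ^ 'ny ^ 'ny \<Rightarrow> real ^ 'nx ^ 'nx
     \<Rightarrow> ((complex ^ 'nx) \<times> (complex ^ 'ny)) set" where
  "incl A B C = {(x, y). \<exists>\<Delta> :: complex ^ 'nx ^ 'ny. spec_norm \<Delta> \<le> 1 \<and>
      y = (cmat A + cmat B ** \<Delta> ** cmat C) *v x}"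

end

theory Submission imports Defs begin

(* Given x and any w with |w| <= |C_i x|, a rank-one contraction maps C_i x to w and another
   maps it to -w, so the inner inclusion contains (x, A_i x + B_i w) and (x, A_i x - B_i w).
   The outer inclusion writes both as A_o x + B_o E C_o x with contractions E; subtracting
   eliminates A_i and A_o and gives 2 |B~ w| <= 2 |C_o x|. Hence
   sigma_max(B~) |C_i x| <= |C_o x| for all x, which for x = C_o^-1 z reads
   sigma_max(B~) |C~ z| <= |z|. *)

definition cvec :: "real ^ 'n \<Rightarrow> complex ^ 'n" where
  "cvec v = (\<chi> i. complex_of_real (v $ i))"

lemma cmat_mult_cvec: "cmat M *v cvec v = cvec (M *v v)"
  by (simp add: cmat_def cvec_def vec_eq_iff matrix_vector_mult_def)

lemma cmat_mult: "cmat (A ** B) = cmat A ** cmat B"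
  by (simp add: cmat_def vec_eq_iff matrix_matrix_mult_def)

lemma cmat_mat_1: "cmat (mat 1) = mat 1"
  by (simp add: cmat_def vec_eq_iff mat_def)

lemma norm_cvec: "norm (cvec v) = norm v"
  by (simp add: cvec_def norm_vec_def)

lemma matrix_inv_right:
  fixes A :: "'a::semiring_1 ^ 'n ^ 'n"
  assumes "invertible A"
  shows "A ** matrix_inv A = mat 1"
  using someI_ex[OF assms[unfolded invertible_def]] unfolding matrix_inv_def by auto

lemma matrix_inv_left:
  fixes A :: "'a::semiring_1 ^ 'n ^ 'n"
  assumes "invertible A"
  shows "matrix_inv A ** A = mat 1"
  using someI_ex[OF assms[unfolded invertible_def]] unfolding matrix_inv_def by auto

lemma norm_matrix_vector_le_spec_norm:
  fixes M :: "'a::{euclidean_space, real_normed_field} ^ 'n ^ 'm"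
  shows "norm (M *v v) \<le> spec_norm M * norm v"
  unfolding spec_norm_def by (rule onorm) simp

lemma spec_norm_le:
  fixes M :: "'a::{euclidean_space, real_normed_field} ^ 'n ^ 'm"
  assumes "\<And>v. norm (M *v v) \<le> c * norm v"
  shows "spec_norm M \<le> c"
  unfolding spec_norm_def by (rule onorm_le) (rule assms)

lemma spec_norm_nonneg:
  fixes M :: "'a::{euclidean_space, real_normed_field} ^ 'n ^ 'm"
  shows "0 \<le> spec_norm M"
  unfolding spec_norm_def by (rule onorm_pos_le) simp

lemma norm_vector_smult:
  fixes x :: "'a::real_normed_field ^ 'n"
  shows "norm (c *s x) = norm c * norm x"
  by (simp add: norm_vec_def norm_mult L2_set_right_distrib)

lemma sum_norm_mult_le_norm_mult:
  fixes u v :: "'a::real_normed_vector ^ 'n"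
  shows "(\<Sum>j\<in>UNIV. norm (v $ j) * norm (u $ j)) \<le> norm v * norm u"
proof -
  have "(\<Sum>j\<in>UNIV. norm (v $ j) * norm (u $ j)) = (\<chi> j. norm (v $ j)) \<bullet> (\<chi> j. norm (u $ j))"
    by (simp add: inner_vec_def)
  also have "\<dots> \<le> norm (\<chi> j. norm (v $ j)) * norm (\<chi> j. norm (u $ j))"
    by (rule norm_cauchy_schwarz)
  also have "\<dots> = norm v * norm u"
    by (simp add: norm_vec_def)
  finally show ?thesis .
qed

text \<open>The rank-one matrix \<open>w v\<^sup>* / \<parallel>v\<parallel>\<^sup>2\<close> maps \<open>v\<close> to \<open>w\<close> and has norm \<open>\<parallel>w\<parallel> / \<parallel>v\<parallel>\<close>.\<close>
lemma exists_contraction_mapping: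
  fixes v :: "complex ^ 'n" and w :: "complex ^ 'm"
  assumes "v \<noteq> 0" "norm w \<le> norm v"
  obtains \<Delta> :: "complex ^ 'n ^ 'm" where "spec_norm \<Delta> \<le> 1" "\<Delta> *v v = w"
proof
  define \<Delta> :: "complex ^ 'n ^ 'm" where
    "\<Delta> = (\<chi> i j. w $ i * cnj (v $ j) / of_real ((norm v)\<^sup>2))"
  define c where "c u = (\<Sum>j\<in>UNIV. cnj (v $ j) * u $ j) / of_real ((norm v)\<^sup>2)" for u
  have nv: "norm v > 0"
    using assms(1) by simp
  have \<Delta>_apply: "\<Delta> *v u = c u *s w" for u
    by (simp add: vec_eq_iff \<Delta>_def c_def matrix_vector_mult_def sum_distrib_left
        sum_divide_distrib algebra_simps)
  have "(\<Sum>j\<in>UNIV. cnj (v $ j) * v $ j) = (\<Sum>j\<in>UNIV. of_real ((norm (v $ j))\<^sup>2))"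
    by (simp only: complex_norm_square mult.commute)
  also have "\<dots> = of_real ((norm v)\<^sup>2)"
    by (simp only: of_real_sum[symmetric]) (simp add: norm_vec_def L2_set_def sum_nonneg)
  finally have "(\<Sum>j\<in>UNIV. cnj (v $ j) * v $ j) = of_real ((norm v)\<^sup>2)" .
  then show "\<Delta> *v v = w"
    using nv by (simp add: \<Delta>_apply c_def)
  show "spec_norm \<Delta> \<le> 1"
  proof (rule spec_norm_le)
    fix u :: "complex ^ 'n"
    have "norm (c u) = norm (\<Sum>j\<in>UNIV. cnj (v $ j) * u $ j) / (norm v)\<^sup>2"
      by (simp add: c_def norm_divide norm_power)
    also have "\<dots> \<le> (\<Sum>j\<in>UNIV. norm (v $ j) * norm (u $ j)) / (norm v)\<^sup>2"
      using norm_sum[of "\<lambda>j. cnj (v $ j) * u $ j" UNIV]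
      by (intro divide_right_mono) (simp_all add: norm_mult)
    also have "\<dots> \<le> norm v * norm u / (norm v)\<^sup>2"
      by (rule divide_right_mono[OF sum_norm_mult_le_norm_mult]) simp
    also have "\<dots> = norm u / norm v"
      using nv by (simp add: power2_eq_square)
    finally have "norm (c u) * norm w \<le> norm u / norm v * norm v"
      using assms(2) by (intro mult_mono) auto
    then show "norm (\<Delta> *v u) \<le> 1 * norm u"
      using nv by (simp add: \<Delta>_apply norm_vector_smult)
  qed
qed

lemma cmat_matrix_inv_cancel:
  fixes A :: "real ^ 'n ^ 'n"
  assumes "invertible A"
  shows "cmat (matrix_inv A) *v (cmat A *v y) = y"
  by (simp add: matrix_vector_mul_assoc matrix_inv_left[OF assms] cmat_mat_1 flip: cmat_mult)

lemma mem_incl_iff: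
  "(x, y) \<in> incl A B C \<longleftrightarrow>
     (\<exists>\<Delta>. spec_norm \<Delta> \<le> 1 \<and> y = cmat A *v x + cmat B *v (\<Delta> *v (cmat C *v x)))"
  by (simp add: incl_def matrix_vector_mult_add_rdistrib flip: matrix_vector_mul_assoc)

lemma incl_subset_imp_norm_le:
  fixes Ao Ai :: "real ^ 'nx ^ 'ny"
    and Bo Bi :: "real ^ 'ny ^ 'ny"
    and Co Ci :: "real ^ 'nx ^ 'nx"
  assumes "invertible Bo" "incl Ai Bi Ci \<subseteq> incl Ao Bo Co"
    and "norm w \<le> norm (cmat Ci *v x)"
  shows "norm (cmat (matrix_inv Bo ** Bi) *v w) \<le> norm (cmat Co *v x)"
proof (cases "cmat Ci *v x = 0")
  case True
  with assms(3) show ?thesis by simp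
next
  case False
  define B where "B = cmat (matrix_inv Bo ** Bi)"
  define a where "a = cmat (matrix_inv Bo) *v (cmat Ao *v x - cmat Ai *v x)"
  define u where "u = cmat Co *v x"
  have outer: "\<exists>E. spec_norm E \<le> 1 \<and> B *v z = a + E *v u"
    if z_le: "norm z \<le> norm (cmat Ci *v x)" for z
  proof -
    obtain \<Delta> where "spec_norm \<Delta> \<le> 1" "\<Delta> *v (cmat Ci *v x) = z"
      using exists_contraction_mapping[OF False z_le] by blast
    then have "(x, cmat Ai *v x + cmat Bi *v z) \<in> incl Ai Bi Ci"
      unfolding mem_incl_iff by auto
    with assms(2) have "(x, cmat Ai *v x + cmat Bi *v z) \<in> incl Ao Bo Co"
      by blast
    then obtain E where E: "spec_norm E \<le> 1"
      "cmat Ai *v x + cmat Bi *v z = cmat Ao *v x + cmat Bo *v (E *v u)"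
      unfolding mem_incl_iff u_def by blast
    then have "cmat Bi *v z = (cmat Ao *v x - cmat Ai *v x) + cmat Bo *v (E *v u)"
      by (simp add: algebra_simps)
    then have "cmat (matrix_inv Bo) *v (cmat Bi *v z) = a + E *v u"
      by (simp add: a_def matrix_vector_right_distrib cmat_matrix_inv_cancel[OF assms(1)])
    then have "B *v z = a + E *v u"
      by (simp add: B_def cmat_mult matrix_vector_mul_assoc)
    with E(1) show ?thesis by blast
  qed
  obtain E1 where E1: "spec_norm E1 \<le> 1" "B *v w = a + E1 *v u"
    using outer[OF assms(3)] by blast
  obtain E2 where E2: "spec_norm E2 \<le> 1" "B *v (- w) = a + E2 *v u"
    using outer[of "- w"] assms(3) by auto
  have "2 *\<^sub>R (B *v w) = B *v w - B *v (- w)"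
    by (simp add: linear_neg[OF matrix_vector_mul_linear] scaleR_2)
  also have "\<dots> = E1 *v u - E2 *v u"
    by (simp add: E1(2) E2(2))
  finally have "2 * norm (B *v w) = norm (E1 *v u - E2 *v u)"
    by (metis norm_scaleR abs_numeral)
  also have "\<dots> \<le> spec_norm E1 * norm u + spec_norm E2 * norm u"
    by (intro order_trans[OF norm_triangle_ineq4] add_mono norm_matrix_vector_le_spec_norm)
  also have "\<dots> \<le> 1 * norm u + 1 * norm u"
    by (intro add_mono mult_right_mono E1(1) E2(1) norm_ge_zero)
  finally show ?thesis
    by (simp add: B_def u_def)
qed

lemma spec_norm_mult_le_of_ball:
  fixes M :: "real ^ 'n ^ 'm"
  assumes "0 \<le> r" and bound: "\<And>w. norm w \<le> r \<Longrightarrow> norm (M *v w) \<le> s"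
  shows "spec_norm M * r \<le> s"
proof (cases "r = 0")
  case True
  then show ?thesis
    using bound[of 0] by simp
next
  case False
  with assms(1) have r: "r > 0" by simp
  have "spec_norm M \<le> s / r"
  proof (rule spec_norm_le)
    fix v :: "real ^ 'n"
    show "norm (M *v v) \<le> s / r * norm v"
    proof (cases "v = 0")
      case True
      then show ?thesis by simp
    next
      case False
      then have "norm v > 0" by simp
      moreover have "norm (M *v ((r / norm v) *\<^sub>R v)) \<le> s"
        using \<open>norm v > 0\<close> r by (intro bound) simp
      ultimately show ?thesis
        using r by (simp add: matrix_vector_mult_scaleR field_simps)
    qed
  qed
  with r show ?thesis
    by (simp add: field_simps)
qed

lemma mult_spec_norm_le_one:
  fixes M :: "real ^ 'n ^ 'm"
  assumes "0 \<le> \<beta>" "\<And>z. \<beta> * norm (M *v z) \<le> norm z"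
  shows "\<beta> * spec_norm M \<le> 1"
proof (cases "\<beta> = 0")
  case False
  with assms(1) have "\<beta> > 0" by simp
  have "spec_norm M \<le> 1 / \<beta>"
    by (rule spec_norm_le) (use assms(2) \<open>\<beta> > 0\<close> in \<open>simp add: field_simps\<close>)
  with \<open>\<beta> > 0\<close> show ?thesis
    by (simp add: field_simps)
qed simp

theorem lemma2:
  fixes Ao Ai :: "real ^ 'nx ^ 'ny"
    and Bo Bi :: "real ^ 'ny ^ 'ny"
    and Co Ci :: "real ^ 'nx ^ 'nx"
  assumes "invertible Bo" "invertible Bi" "invertible Co" "invertible Ci"
    and "incl Ai Bi Ci \<subseteq> incl Ao Bo Co"
  shows "spec_norm (matrix_inv Bo ** Bi) * spec_norm (Ci ** matrix_inv Co) \<le> 1"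
proof (rule mult_spec_norm_le_one[OF spec_norm_nonneg])
  fix z :: "real ^ 'nx"
  have "norm ((matrix_inv Bo ** Bi) *v w) \<le> norm (Co *v x)"
    if "norm w \<le> norm (Ci *v x)" for x w
    using incl_subset_imp_norm_le[OF assms(1,5), of "cvec w" "cvec x"] that
    by (simp add: cmat_mult_cvec norm_cvec)
  then have "spec_norm (matrix_inv Bo ** Bi) * norm (Ci *v x) \<le> norm (Co *v x)" for x
    by (intro spec_norm_mult_le_of_ball) auto
  from this[of "matrix_inv Co *v z"]
  show "spec_norm (matrix_inv Bo ** Bi) * norm ((Ci ** matrix_inv Co) *v z) \<le> norm z"
    by (simp add: matrix_vector_mul_assoc matrix_inv_right[OF assms(3)])
qed

end
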